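(* Let $\mathcal A$ be a weighted ODCA over $\mathbb F$, $K=|Q|\cdot|C|$, $c$ a configuration with counter value $n$, $V\subseteq\mathbb F^{|Q|}$ a subspace and $S\subseteq C$. If $z$ is a minimal witness for $(c,\overline V,S,\mathbb N)$, then every counter value occurring in the run of $z$ from $c$ is less than $\max(n,K)+K^2$.
   Context: Fix a field $\mathbb{F}$ and a finite alphabet $\Sigma$. For $n\in\mathbb N$ let $\mathrm{sgn}(n)=0$ if $n=0$ and $1$ if $n>0$. A weighted ODCA is $\mathcal{A}=((C,\delta_0,\delta_1,p_0),(Q,\lambda,\Delta,\eta))$ where $C$ is a finite nonempty set of counter states, $\delta_0:C\times\Sigma\to C\times\{0,+1\}$ and $\delta_1:C\times\Sigma\to C\times\{-1,0,+1\}$ are deterministic counter transition functions, $p_0\in C$, $Q$ is a finite nonempty set of states, $\lambda,\eta\in\mathbb{F}^{|Q|}$, and $\Delta:\Sigma\times\{0,1\}\to\mathbb{F}^{|Q|\times|Q|}$. A configuration is a triple $(x,p,n)\in\mathbb{F}^{|Q|}\times C\times\mathbb{N}$ (weight vector, counter state, counter value). Reading $a\in\Sigma$ from $(x,p,n)$ with $d=\mathrm{sgn}(n)$ and $\delta_d(p,a)=(p',e)$ leads to $(x\Delta(a,d),p',n+e)$; for each word $w$ and configuration $c$ there is a unique run of $w$ from $c$. For a subspace $V\subseteq\mathbb F^{|Q|}$ let $\overline V=\mathbb F^{|Q|}\setminus V$. For $S\subseteq C$ and $X\subseteq\mathbb N$, a word $z$ is a witness for $(c,\overline V,S,X)$ if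 the run of $z$ from $c$ ends in a configuration $(x,p,n)$ with $x\in\overline V$, $p\in S$, $n\in X$; it is a minimal witness if no strictly shorter word is a witness. *)

theory Defs
  imports Main
begin

(* Weighted ODCA over a field 'f, alphabet 'a (finite type), counter states 'c (finite type C),
   states 'q (finite type Q).  Weight vectors in F^|Q| are functions 'q => 'f,
   matrices in F^{|Q| x |Q|} are functions 'q => 'q => 'f. *)

definition sgn_nat :: "nat \<Rightarrow> nat" where
  "sgn_nat n = (if n = 0 then 0 else 1)"

definition vec_mat :: "('q::finite \<Rightarrow> 'f::field) \<Rightarrow> ('q \<Rightarrow> 'q \<Rightarrow> 'f) \<Rightarrow> ('q \<Rightarrow> 'f)" where
  "vec_mat x M = (\<lambda>j. \<Sum>i\<in>UNIV. x i * M i j)"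

definition odca_wf :: "('c \<Rightarrow> 'a \<Rightarrow> 'c \<times> int) \<Rightarrow> ('c \<Rightarrow> 'a \<Rightarrow> 'c \<times> int) \<Rightarrow> bool" where
  "odca_wf delta0 delta1 \<longleftrightarrow>
     (\<forall>p a. snd (delta0 p a) \<in> {0, 1}) \<and> (\<forall>p a. snd (delta1 p a) \<in> {-1, 0, 1})"

type_synonym ('q, 'f, 'c) config = "('q \<Rightarrow> 'f) \<times> 'c \<times> nat"

definition odca_step ::
  "('c \<Rightarrow> 'a \<Rightarrow> 'c \<times> int) \<Rightarrow> ('c \<Rightarrow> 'a \<Rightarrow> 'c \<times> int) \<Rightarrow> ('a \<Rightarrow> nat \<Rightarrow> 'q::finite \<Rightarrow> 'q \<Rightarrow> 'f::field)
   \<Rightarrow> ('q, 'f, 'c) config \<Rightarrow> 'a \<Rightarrow> ('q, 'f, 'c) config" where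
  "odca_step delta0 delta1 Delta cfg a =
     (case cfg of (x, p, n) \<Rightarrow>
        let d = sgn_nat n;
            (p', e) = (if d = 0 then delta0 p a else delta1 p a)
        in (vec_mat x (Delta a d), p', nat (int n + e)))"

fun odca_run ::
  "('c \<Rightarrow> 'a \<Rightarrow> 'c \<times> int) \<Rightarrow> ('c \<Rightarrow> 'a \<Rightarrow> 'c \<times> int) \<Rightarrow> ('a \<Rightarrow> nat \<Rightarrow> 'q::finite \<Rightarrow> 'q \<Rightarrow> 'f::field)
   \<Rightarrow> ('q, 'f, 'c) config \<Rightarrow> 'a list \<Rightarrow> ('q, 'f, 'c) config list" where
  "odca_run delta0 delta1 Delta cfg [] = [cfg]"
| "odca_run delta0 delta1 Delta cfg (a # w) =
     cfg # odca_run delta0 delta1 Delta (odca_step delta0 delta1 Delta cfg a) w"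

definition odca_final where
  "odca_final delta0 delta1 Delta cfg w = last (odca_run delta0 delta1 Delta cfg w)"

definition is_subspace :: "('q \<Rightarrow> 'f::field) set \<Rightarrow> bool" where
  "is_subspace V \<longleftrightarrow> (\<lambda>_. 0) \<in> V \<and> (\<forall>x\<in>V. \<forall>y\<in>V. (\<lambda>i. x i + y i) \<in> V)
      \<and> (\<forall>c. \<forall>x\<in>V. (\<lambda>i. c * x i) \<in> V)"

(* z is a witness for (cfg, complement of V, S, X) *)
definition is_witness where
  "is_witness delta0 delta1 Delta cfg V S X z \<longleftrightarrow>
     (case odca_final delta0 delta1 Delta cfg z of (x, p, m) \<Rightarrow> x \<notin> V \<and> p \<in> S \<and> m \<in> X)"

definition is_min_witness where
  "is_min_witness delta0 delta1 Delta cfg V S X z \<longleftrightarrow>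
     is_witness delta0 delta1 Delta cfg V S X z \<and>
     (\<forall>z'. length z' < length z \<longrightarrow> \<not> is_witness delta0 delta1 Delta cfg V S X z')"

end

theory Submission
  imports Defs "HOL-Analysis.Cartesian_Space"
begin

text \<open>Suppose the counter reaches \<open>M + K\<^sup>2\<close> at position \<open>t\<close>, where \<open>M = max n K\<close>, and let \<open>A l\<close>
  be the last visit of level \<open>l \<ge> M\<close> before \<open>t\<close>. If the counter stays above \<open>M\<close> after \<open>t\<close>, more
  than \<open>|Q|\<close> of the \<open>K + 1\<close> levels in \<open>[M, M + K]\<close> share the counter state at \<open>A l\<close>, so the weight
  vectors there satisfy a nontrivial linear relation. Deleting the factor between \<open>A k\<close> and \<open>A j\<close>
  (\<open>k < j\<close>) and running the rest of \<open>z\<close> with a counter lowered by \<open>j - k\<close>, which stays positive,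
  gives a shorter word ending in the same counter state, so by minimality its final weight lies in
  \<open>V\<close>. Solving the relation for its largest level then puts the final weight of \<open>z\<close> itself into
  \<open>V\<close>, a contradiction. If instead the counter returns to \<open>M\<close>, pair each \<open>A l\<close> with the first
  visit \<open>B l\<close> after \<open>t\<close>: among \<open>K\<^sup>2 + 1\<close> levels more than \<open>|Q|\<^sup>2\<close> share both states, the
  matrices of the factors between \<open>A l\<close> and \<open>B l\<close> are linearly dependent, and replacing the factor of
  the smallest level by a nested one argues in the same way.\<close>

section \<open>Linear algebra over an arbitrary field\<close>

lemma exists_nontrivial_relation:
  fixes v :: "nat \<Rightarrow> 'n::finite \<Rightarrow> 'f::field"
  assumes "finite I" "CARD('n) < card I"
  shows "\<exists>c. (\<exists>k\<in>I. c k \<noteq> 0) \<and> (\<forall>i. (\<Sum>k\<in>I. c k * v k i) = 0)"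
proof -
  define u where "u k = (\<chi> i. v k i)" for k
  have "\<exists>c. (\<exists>k\<in>I. c k \<noteq> 0) \<and> (\<Sum>k\<in>I. c k *s u k) = 0"
  proof (cases "inj_on u I")
    case True
    have "card (u ` I) = card I" using True by (simp add: card_image)
    moreover have "vec.dim (u ` I) \<le> CARD('n)"
      using vec.dim_subset_UNIV[of "u ` I"] by (simp add: vec.dimension_def card_cart_basis)
    ultimately have "vec.dependent (u ` I)"
      using vec.dependent_biggerset_general[of "u ` I"] assms by linarith
    moreover have "finite (u ` I)" using assms(1) by simp
    ultimately obtain a where a: "\<exists>y\<in>u ` I. a y \<noteq> 0" "(\<Sum>y\<in>u ` I. a y *s y) = 0"
      using vec.dependent_finite by blast
    have "(\<Sum>y\<in>u ` I. a y *s y) = (\<Sum>k\<in>I. a (u k) *s u k)"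
      using sum.reindex[OF True, of "\<lambda>y. a y *s y"] by simp
    then show ?thesis using a by (intro exI[of _ "\<lambda>k. a (u k)"]) auto
  next
    case False
    then obtain j k where jk: "j \<in> I" "k \<in> I" "j \<noteq> k" "u j = u k"
      unfolding inj_on_def by blast
    let ?c = "\<lambda>i. if i = j then (1::'f) else if i = k then -1 else 0"
    have "(\<Sum>i\<in>I. ?c i *s u i) = (\<Sum>i\<in>{j,k}. ?c i *s u i)"
      using assms(1) jk by (intro sum.mono_neutral_right) auto
    also have "\<dots> = 0" using jk by simp
    finally show ?thesis using jk by (intro exI[of _ ?c]) auto
  qed
  then obtain c where c: "\<exists>k\<in>I. c k \<noteq> 0" "(\<Sum>k\<in>I. c k *s u k) = 0"
    by blast
  have "(\<Sum>k\<in>I. c k * v k i) = 0" for i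
  proof -
    have "(\<Sum>k\<in>I. c k *s u k) $ i = 0" using c(2) by simp
    then show ?thesis by (simp add: sum_component u_def)
  qed
  then show ?thesis using c(1) by blast
qed

lemma subspace_lincomb:
  assumes "is_subspace V" "finite I" "\<forall>k\<in>I. g k \<in> V"
  shows "(\<lambda>q. \<Sum>k\<in>I. c k * g k q) \<in> V"
  using assms(2,3)
proof (induction I rule: finite_induct)
  case empty
  then show ?case using assms(1) unfolding is_subspace_def by simp
next
  case (insert k I)
  have summands: "(\<lambda>q. c k * g k q) \<in> V" "(\<lambda>q. \<Sum>k\<in>I. c k * g k q) \<in> V"
    using assms(1) insert unfolding is_subspace_def by auto
  have "\<forall>x\<in>V. \<forall>y\<in>V. (\<lambda>i. x i + y i) \<in> V"
    using assms(1) unfolding is_subspace_def by blast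
  from this[rule_format, OF summands] show ?case using insert by simp
qed

lemma relation_solve_in_subspace:
  fixes g :: "nat \<Rightarrow> 'q \<Rightarrow> 'f::field"
  assumes "is_subspace V" "finite I" "j \<in> I" "c j \<noteq> 0"
    and "\<forall>q. (\<Sum>k\<in>I. c k * g k q) = 0"
    and "\<forall>k\<in>I - {j}. c k \<noteq> 0 \<longrightarrow> g k \<in> V"
  shows "g j \<in> V"
proof -
  let ?J = "{k\<in>I - {j}. c k \<noteq> 0}"
  have "g j = (\<lambda>q. \<Sum>k\<in>?J. (- c k / c j) * g k q)"
  proof
    fix q
    have "(\<Sum>k\<in>I - {j}. c k * g k q) = (\<Sum>k\<in>?J. c k * g k q)"
      using assms(2) by (intro sum.mono_neutral_right) auto
    moreover have "(\<Sum>k\<in>I. c k * g k q) = c j * g j q + (\<Sum>k\<in>I - {j}. c k * g k q)"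
      using assms(2,3) by (simp add: sum.remove)
    ultimately have "c j * g j q = - (\<Sum>k\<in>?J. c k * g k q)"
      using assms(5) by (simp add: eq_neg_iff_add_eq_0 add.commute)
    then have "g j q = - (\<Sum>k\<in>?J. c k * g k q) / c j"
      using assms(4) by (simp add: field_simps)
    then show "g j q = (\<Sum>k\<in>?J. (- c k / c j) * g k q)"
      by (simp add: sum_divide_distrib sum_negf)
  qed
  moreover have "(\<lambda>q. \<Sum>k\<in>?J. (- c k / c j) * g k q) \<in> V"
    by (rule subspace_lincomb[OF assms(1)]) (use assms(2,6) in auto)
  ultimately show ?thesis by simp
qed

text \<open>The selector is applied to the support of a nontrivial relation among the \<open>v k\<close>; the index
  it picks is forced into the subspace.\<close>

lemma subspace_exchange:
  fixes v :: "nat \<Rightarrow> 'n::finite \<Rightarrow> 'f::field" and g :: "nat \<Rightarrow> nat \<Rightarrow> 'q \<Rightarrow> 'f"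
  assumes "is_subspace V" "finite I" "CARD('n) < card I"
    and relations: "\<And>j c. j \<in> I \<Longrightarrow> \<forall>i. (\<Sum>k\<in>I. c k * v k i) = 0
                       \<Longrightarrow> \<forall>q. (\<Sum>k\<in>I. c k * g j k q) = 0"
    and select: "\<And>J. J \<subseteq> I \<Longrightarrow> J \<noteq> {} \<Longrightarrow> finite J \<Longrightarrow> \<exists>j\<in>J. \<forall>k\<in>J - {j}. g j k \<in> V"
  shows "\<exists>j\<in>I. g j j \<in> V"
proof -
  obtain c where c: "\<exists>k\<in>I. c k \<noteq> 0" "\<forall>i. (\<Sum>k\<in>I. c k * v k i) = 0"
    using exists_nontrivial_relation[OF assms(2,3)] by blast
  define J where "J = {k\<in>I. c k \<noteq> 0}"
  obtain j where j: "j \<in> J" "\<forall>k\<in>J - {j}. g j k \<in> V"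
    using select[of J] c(1) assms(2) unfolding J_def by auto
  have "g j j \<in> V"
    using relation_solve_in_subspace[OF assms(1,2), of j c "g j"] relations[OF _ c(2)] j
    unfolding J_def by auto
  then show ?thesis using j(1) unfolding J_def by blast
qed

lemma subspace_exchange_max:
  fixes v :: "nat \<Rightarrow> 'n::finite \<Rightarrow> 'f::field" and g :: "nat \<Rightarrow> nat \<Rightarrow> 'q \<Rightarrow> 'f"
  assumes "is_subspace V" "finite I" "CARD('n) < card I"
    and "\<And>j c. j \<in> I \<Longrightarrow> \<forall>i. (\<Sum>k\<in>I. c k * v k i) = 0 \<Longrightarrow> \<forall>q. (\<Sum>k\<in>I. c k * g j k q) = 0"
    and "\<And>j k. j \<in> I \<Longrightarrow> k \<in> I \<Longrightarrow> k < j \<Longrightarrow> g j k \<in> V"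
  shows "\<exists>j\<in>I. g j j \<in> V"
proof (rule subspace_exchange[OF assms(1-4)])
  fix J assume J: "J \<subseteq> I" "J \<noteq> {}" "finite J"
  have "k < Max J" if "k \<in> J - {Max J}" for k
    using Max_ge[OF J(3)] that by (auto simp: order.strict_iff_order)
  then show "\<exists>j\<in>J. \<forall>k\<in>J - {j}. g j k \<in> V"
    using Max_in[OF J(3,2)] J(1) assms(5) by blast
qed

lemma subspace_exchange_min:
  fixes v :: "nat \<Rightarrow> 'n::finite \<Rightarrow> 'f::field" and g :: "nat \<Rightarrow> nat \<Rightarrow> 'q \<Rightarrow> 'f"
  assumes "is_subspace V" "finite I" "CARD('n) < card I"
    and "\<And>j c. j \<in> I \<Longrightarrow> \<forall>i. (\<Sum>k\<in>I. c k * v k i) = 0 \<Longrightarrow> \<forall>q. (\<Sum>k\<in>I. c k * g j k q) = 0"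
    and "\<And>j k. j \<in> I \<Longrightarrow> k \<in> I \<Longrightarrow> j < k \<Longrightarrow> g j k \<in> V"
  shows "\<exists>j\<in>I. g j j \<in> V"
proof (rule subspace_exchange[OF assms(1-4)])
  fix J assume J: "J \<subseteq> I" "J \<noteq> {}" "finite J"
  have "Min J < k" if "k \<in> J - {Min J}" for k
    using Min_le[OF J(3)] that by (auto simp: order.strict_iff_order)
  then show "\<exists>j\<in>J. \<forall>k\<in>J - {j}. g j k \<in> V"
    using Min_in[OF J(3,2)] J(1) assms(5) by blast
qed

section \<open>Matrices as functions\<close>

definition mat_id :: "'q \<Rightarrow> 'q \<Rightarrow> 'f::field" where
  "mat_id = (\<lambda>i j. if i = j then 1 else 0)"

definition mat_mul :: "('q::finite \<Rightarrow> 'q \<Rightarrow> 'f::field) \<Rightarrow> ('q \<Rightarrow> 'q \<Rightarrow> 'f) \<Rightarrow> 'q \<Rightarrow> 'q \<Rightarrow> 'f" where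
  "mat_mul A B = (\<lambda>i k. \<Sum>j\<in>UNIV. A i j * B j k)"

lemma vec_mat_mat_mul: "vec_mat (vec_mat x A) B = vec_mat x (mat_mul A B)"
  unfolding vec_mat_def mat_mul_def
  by (auto simp: sum_distrib_left sum_distrib_right mult.assoc intro!: ext sum.swap)

lemma vec_mat_mat_id [simp]: "vec_mat x mat_id = x"
  unfolding vec_mat_def mat_id_def by (auto simp: if_distrib cong: if_cong)

lemma mat_mul_id_left [simp]: "mat_mul mat_id A = A"
proof (intro ext)
  fix i k
  have "(\<Sum>j\<in>UNIV. mat_id i j * A j k) = (\<Sum>j\<in>UNIV. if i = j then A j k else 0)"
    unfolding mat_id_def by (intro sum.cong) auto
  then show "mat_mul mat_id A i k = A i k" unfolding mat_mul_def by simp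
qed

lemma mat_mul_assoc: "mat_mul (mat_mul A B) C = mat_mul A (mat_mul B C)"
  unfolding mat_mul_def
  by (auto simp: sum_distrib_left sum_distrib_right mult.assoc intro!: ext sum.swap)

lemma relation_vec_mat_right:
  fixes u :: "nat \<Rightarrow> 'q::finite \<Rightarrow> 'f::field"
  assumes "\<forall>q. (\<Sum>k\<in>I. c k * u k q) = 0"
  shows "\<forall>q. (\<Sum>k\<in>I. c k * vec_mat (u k) T q) = 0"
proof
  fix q
  have "(\<Sum>k\<in>I. c k * vec_mat (u k) T q) = (\<Sum>k\<in>I. \<Sum>i\<in>UNIV. c k * u k i * T i q)"
    unfolding vec_mat_def by (simp add: sum_distrib_left mult.assoc)
  also have "\<dots> = (\<Sum>i\<in>UNIV. (\<Sum>k\<in>I. c k * u k i) * T i q)"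
    by (subst sum.swap) (simp add: sum_distrib_right)
  finally show "(\<Sum>k\<in>I. c k * vec_mat (u k) T q) = 0" using assms by simp
qed

lemma relation_vec_mat_left:
  fixes N :: "nat \<Rightarrow> 'q::finite \<Rightarrow> 'q \<Rightarrow> 'f::field"
  assumes "\<forall>ab. (\<Sum>k\<in>I. c k * case_prod (N k) ab) = 0"
  shows "\<forall>q. (\<Sum>k\<in>I. c k * vec_mat u (N k) q) = 0"
proof
  fix q
  have "(\<Sum>k\<in>I. c k * vec_mat u (N k) q) = (\<Sum>k\<in>I. \<Sum>i\<in>UNIV. c k * N k i q * u i)"
    unfolding vec_mat_def by (simp add: sum_distrib_left mult_ac)
  also have "\<dots> = (\<Sum>i\<in>UNIV. (\<Sum>k\<in>I. c k * N k i q) * u i)"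
    by (subst sum.swap) (simp add: sum_distrib_right)
  finally show "(\<Sum>k\<in>I. c k * vec_mat u (N k) q) = 0" using assms by (simp add: split_paired_all)
qed

section \<open>Runs split into counter and weight parts\<close>

definition counter_step ::
  "('c \<Rightarrow> 'a \<Rightarrow> 'c \<times> int) \<Rightarrow> ('c \<Rightarrow> 'a \<Rightarrow> 'c \<times> int) \<Rightarrow> 'c \<times> nat \<Rightarrow> 'a \<Rightarrow> 'c \<times> nat" where
  "counter_step d0 d1 c a =
     (let (p', e) = (if sgn_nat (snd c) = 0 then d0 (fst c) a else d1 (fst c) a)
      in (p', nat (int (snd c) + e)))"

fun run_matrix ::
  "('c \<Rightarrow> 'a \<Rightarrow> 'c \<times> int) \<Rightarrow> ('c \<Rightarrow> 'a \<Rightarrow> 'c \<times> int) \<Rightarrow> ('a \<Rightarrow> nat \<Rightarrow> 'q::finite \<Rightarrow> 'q \<Rightarrow> 'f::field)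
   \<Rightarrow> 'c \<times> nat \<Rightarrow> 'a list \<Rightarrow> 'q \<Rightarrow> 'q \<Rightarrow> 'f" where
  "run_matrix d0 d1 Delta c [] = mat_id"
| "run_matrix d0 d1 Delta c (a # w) =
     mat_mul (Delta a (sgn_nat (snd c))) (run_matrix d0 d1 Delta (counter_step d0 d1 c a) w)"

lemma odca_step_split:
  "odca_step d0 d1 Delta (x, c) a = (vec_mat x (Delta a (sgn_nat (snd c))), counter_step d0 d1 c a)"
  by (cases c) (auto simp: odca_step_def counter_step_def Let_def split: prod.splits)

lemma foldl_odca_step:
  "foldl (odca_step d0 d1 Delta) (x, c) w
     = (vec_mat x (run_matrix d0 d1 Delta c w), foldl (counter_step d0 d1) c w)"
  by (induction w arbitrary: x c) (auto simp: odca_step_split vec_mat_mat_mul)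

lemma run_matrix_append:
  "run_matrix d0 d1 Delta c (u @ w)
     = mat_mul (run_matrix d0 d1 Delta c u) (run_matrix d0 d1 Delta (foldl (counter_step d0 d1) c u) w)"
  by (induction u arbitrary: c) (auto simp: mat_mul_assoc)

lemma odca_final_foldl: "odca_final d0 d1 Delta cfg w = foldl (odca_step d0 d1 Delta) cfg w"
proof -
  have "last (odca_run d0 d1 Delta cfg w) = foldl (odca_step d0 d1 Delta) cfg w"
  proof (induction w arbitrary: cfg)
    case (Cons a w)
    then show ?case by (cases w) auto
  qed simp
  then show ?thesis unfolding odca_final_def .
qed

lemma set_odca_run:
  "cf \<in> set (odca_run d0 d1 Delta cfg w)
     \<Longrightarrow> \<exists>i\<le>length w. cf = foldl (odca_step d0 d1 Delta) cfg (take i w)"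
proof (induction w arbitrary: cfg)
  case (Cons a w)
  show ?case
  proof (cases "cf = cfg")
    case False
    then have "cf \<in> set (odca_run d0 d1 Delta (odca_step d0 d1 Delta cfg a) w)"
      using Cons.prems by simp
    then obtain i where "i \<le> length w"
      "cf = foldl (odca_step d0 d1 Delta) (odca_step d0 d1 Delta cfg a) (take i w)"
      using Cons.IH by blast
    then show ?thesis by (intro exI[of _ "Suc i"]) auto
  qed (intro exI[of _ 0], auto)
qed simp

lemma witness_iff:
  "is_witness d0 d1 Delta (x, c) V S UNIV w \<longleftrightarrow>
     vec_mat x (run_matrix d0 d1 Delta c w) \<notin> V \<and> fst (foldl (counter_step d0 d1) c w) \<in> S"
  unfolding is_witness_def odca_final_foldl foldl_odca_step by (simp split: prod.splits)

lemma counter_step_diff: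
  assumes "odca_wf d0 d1"
  shows "snd (counter_step d0 d1 c a) \<le> snd c + 1 \<and> snd c \<le> snd (counter_step d0 d1 c a) + 1"
proof -
  obtain p' e where pe: "(if sgn_nat (snd c) = 0 then d0 (fst c) a else d1 (fst c) a) = (p', e)"
    by fastforce
  have "e = snd (if sgn_nat (snd c) = 0 then d0 (fst c) a else d1 (fst c) a)"
    using pe by simp
  then have "e \<in> {-1, 0, 1}"
    using assms unfolding odca_wf_def by (simp split: if_splits)
  moreover have "snd (counter_step d0 d1 c a) = nat (int (snd c) + e)"
    using pe unfolding counter_step_def by simp
  ultimately show ?thesis by auto
qed

text \<open>On a positive counter only \<open>\<delta>\<^sub>1\<close> is used and effects are at least \<open>-1\<close>, so as long as the
  counter stays above \<open>d\<close> the run from a counter lowered by \<open>d\<close> makes the same moves.\<close>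

lemma counter_run_shift:
  assumes "odca_wf d0 d1" and "d \<le> m"
    and "\<forall>k<length w. d < snd (foldl (counter_step d0 d1) (q, m) (take k w))"
  shows "foldl (counter_step d0 d1) (q, m - d) w
           = (fst (foldl (counter_step d0 d1) (q, m) w), snd (foldl (counter_step d0 d1) (q, m) w) - d)"
    and "run_matrix d0 d1 Delta (q, m - d) w = run_matrix d0 d1 Delta (q, m) w"
proof -
  have "foldl (counter_step d0 d1) (q, m - d) w
           = (fst (foldl (counter_step d0 d1) (q, m) w), snd (foldl (counter_step d0 d1) (q, m) w) - d)
        \<and> run_matrix d0 d1 Delta (q, m - d) w = run_matrix d0 d1 Delta (q, m) w"
    using assms(2,3)
  proof (induction w arbitrary: q m)
    case (Cons a w)
    have dm: "d < m" using Cons.prems(2) by force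
    obtain q' e where qe: "d1 q a = (q', e)" by fastforce
    have e: "e \<in> {-1, 0, 1}" using assms(1) qe unfolding odca_wf_def by (metis snd_conv)
    have steps: "counter_step d0 d1 (q, m) a = (q', nat (int m + e))"
      "counter_step d0 d1 (q, m - d) a = (q', nat (int m + e) - d)"
      using dm e qe by (auto simp: counter_step_def sgn_nat_def)
    have sgn: "sgn_nat (m - d) = sgn_nat m" using dm by (simp add: sgn_nat_def)
    have "\<forall>k<length w. d < snd (foldl (counter_step d0 d1) (q', nat (int m + e)) (take k w))"
      using Cons.prems(2) steps(1) by (auto dest: spec[of _ "Suc _"])
    moreover have "d \<le> nat (int m + e)" using dm e by auto
    ultimately show ?case using Cons.IH steps sgn by simp
  qed simp
  then show "foldl (counter_step d0 d1) (q, m - d) w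
           = (fst (foldl (counter_step d0 d1) (q, m) w), snd (foldl (counter_step d0 d1) (q, m) w) - d)"
    and "run_matrix d0 d1 Delta (q, m - d) w = run_matrix d0 d1 Delta (q, m) w"
    by auto
qed

section \<open>Walks with steps of size at most one\<close>

definition steps_by_one :: "(nat \<Rightarrow> nat) \<Rightarrow> nat \<Rightarrow> bool" where
  "steps_by_one f N \<longleftrightarrow> (\<forall>k<N. f (Suc k) \<le> f k + 1 \<and> f k \<le> f (Suc k) + 1)"

lemma discrete_ivt:
  assumes "steps_by_one f N" "i \<le> j" "j \<le> N" "f i \<le> l \<and> l \<le> f j \<or> f j \<le> l \<and> l \<le> f i"
  shows "\<exists>k. i \<le> k \<and> k \<le> j \<and> f k = l"
  using assms(2-4)
proof (induction j)
  case (Suc j)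
  show ?case
  proof (cases "i = Suc j")
    case False
    then have "i \<le> j" "j \<le> N" using Suc.prems(1,2) by auto
    show ?thesis
    proof (cases "f i \<le> l \<and> l \<le> f j \<or> f j \<le> l \<and> l \<le> f i")
      case True
      then show ?thesis using Suc.IH[OF \<open>i \<le> j\<close> \<open>j \<le> N\<close>] le_SucI by blast
    next
      case False
      have "f (Suc j) \<le> f j + 1 \<and> f j \<le> f (Suc j) + 1"
        using assms(1) Suc.prems(2) unfolding steps_by_one_def by simp
      then have "f (Suc j) = l" using Suc.prems(3) False by linarith
      then show ?thesis using Suc.prems(1) by blast
    qed
  qed (use Suc.prems(3) in auto)
qed simp

lemma last_visits:
  assumes "steps_by_one f N" "t \<le> N" "f 0 \<le> lo" "hi \<le> f t"
  obtains A where "\<And>l. l \<in> {lo..hi} \<Longrightarrow> A l \<le> t \<and> f (A l) = l \<and> (\<forall>k. A l < k \<and> k \<le> t \<longrightarrow> l < f k)"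
    and "strict_mono_on {lo..hi} A"
proof -
  have "\<exists>a\<le>t. f a = l \<and> (\<forall>k. a < k \<and> k \<le> t \<longrightarrow> l < f k)" if "l \<in> {lo..hi}" for l
  proof -
    let ?visits = "{k. k \<le> t \<and> f k = l}"
    have "?visits \<noteq> {}" using discrete_ivt[OF assms(1) _ assms(2), of 0 l] assms that by auto
    have fin: "finite ?visits" by (rule finite_subset[of _ "{..t}"]) auto
    have last: "Max ?visits \<in> ?visits" using Max_in[OF fin \<open>?visits \<noteq> {}\<close>] .
    have "l < f k" if after: "Max ?visits < k" and before: "k \<le> t" for k
    proof (rule ccontr)
      assume "\<not> l < f k"
      then obtain k' where k': "k \<le> k'" "k' \<in> ?visits"
        using discrete_ivt[OF assms(1) before assms(2), of l] \<open>l \<in> {lo..hi}\<close> assms(4) by auto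
      then show False using Max_ge[OF fin k'(2)] after by simp
    qed
    then show ?thesis using last by blast
  qed
  then obtain A where A: "\<And>l. l \<in> {lo..hi} \<Longrightarrow> A l \<le> t \<and> f (A l) = l \<and> (\<forall>k. A l < k \<and> k \<le> t \<longrightarrow> l < f k)"
    by metis
  have "strict_mono_on {lo..hi} A"
  proof (rule monotone_onI)
    fix l l' assume "l \<in> {lo..hi}" "l' \<in> {lo..hi}" "l < l'"
    then show "A l < A l'" using A[of l] A[of l'] by (metis le_less_trans less_asym not_less_iff_gr_or_eq)
  qed
  with A that show ?thesis by blast
qed

lemma first_visits:
  assumes "steps_by_one f N" "t \<le> e" "e \<le> N" "f e \<le> lo" "hi \<le> f t"
  obtains B where "\<And>l. l \<in> {lo..hi} \<Longrightarrow> t \<le> B l \<and> B l \<le> e \<and> f (B l) = l \<and> (\<forall>k. t \<le> k \<and> k < B l \<longrightarrow> l < f k)"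
    and "strict_antimono_on {lo..hi} B"
proof -
  have "\<exists>b. t \<le> b \<and> b \<le> e \<and> f b = l \<and> (\<forall>k. t \<le> k \<and> k < b \<longrightarrow> l < f k)" if "l \<in> {lo..hi}" for l
  proof -
    let ?visits = "{k. t \<le> k \<and> k \<le> e \<and> f k = l}"
    have "?visits \<noteq> {}" using discrete_ivt[OF assms(1-3), of l] assms that by auto
    have fin: "finite ?visits" by (rule finite_subset[of _ "{..e}"]) auto
    have first: "Min ?visits \<in> ?visits" using Min_in[OF fin \<open>?visits \<noteq> {}\<close>] .
    have "l < f k" if after: "t \<le> k" and before: "k < Min ?visits" for k
    proof (rule ccontr)
      assume "\<not> l < f k"
      moreover have "k \<le> N" using first before assms(3) by auto
      ultimately obtain k' where k': "k' \<le> k" "k' \<in> ?visits"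
        using discrete_ivt[OF assms(1) after, of l] \<open>l \<in> {lo..hi}\<close> assms(5) first before by fastforce
      then show False using Min_le[OF fin k'(2)] before by simp
    qed
    then show ?thesis using first by blast
  qed
  then obtain B where B: "\<And>l. l \<in> {lo..hi} \<Longrightarrow> t \<le> B l \<and> B l \<le> e \<and> f (B l) = l \<and> (\<forall>k. t \<le> k \<and> k < B l \<longrightarrow> l < f k)"
    by metis
  have "strict_antimono_on {lo..hi} B"
  proof (rule monotone_onI)
    fix l l' assume "l \<in> {lo..hi}" "l' \<in> {lo..hi}" "l < l'"
    then show "B l' < B l" using B[of l] B[of l'] by (metis le_less_trans less_asym not_less_iff_gr_or_eq)
  qed
  with B that show ?thesis by blast
qed

lemma pigeonhole_fibre:
  fixes f :: "nat \<Rightarrow> 'b::finite"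
  assumes "finite I" "CARD('b) * r < card I"
  obtains y where "r < card {l\<in>I. f l = y}"
proof -
  have "I = (\<Union>y. {l\<in>I. f l = y})" by auto
  then have "card I \<le> (\<Sum>y\<in>UNIV. card {l\<in>I. f l = y})"
    using card_UN_le[of UNIV "\<lambda>y. {l\<in>I. f l = y}"] by simp
  then have "\<not> (\<forall>y. card {l\<in>I. f l = y} \<le> r)"
    using sum_mono[of UNIV "\<lambda>y. card {l\<in>I. f l = y}" "\<lambda>_. r"] assms(2) by auto
  then show ?thesis using that by (auto simp: not_le)
qed

section \<open>The run of a minimal witness\<close>

locale min_witness =
  fixes d0 d1 :: "'c::finite \<Rightarrow> 'a \<Rightarrow> 'c \<times> int"
    and Delta :: "'a \<Rightarrow> nat \<Rightarrow> 'q::finite \<Rightarrow> 'q \<Rightarrow> 'f::field"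
    and x :: "'q \<Rightarrow> 'f" and p :: 'c and n :: nat
    and V :: "('q \<Rightarrow> 'f) set" and S :: "'c set" and z :: "'a list"
  assumes wf: "odca_wf d0 d1"
    and subspace: "is_subspace V"
    and minimal: "is_min_witness d0 d1 Delta (x, p, n) V S UNIV z"
begin

definition conf :: "nat \<Rightarrow> 'c \<times> nat" where
  "conf i = foldl (counter_step d0 d1) (p, n) (take i z)"

abbreviation state :: "nat \<Rightarrow> 'c" where
  "state i \<equiv> fst (conf i)"

abbreviation counter :: "nat \<Rightarrow> nat" where
  "counter i \<equiv> snd (conf i)"

definition seg :: "nat \<Rightarrow> nat \<Rightarrow> 'a list" where
  "seg i j = drop i (take j z)"

definition seg_matrix :: "nat \<Rightarrow> nat \<Rightarrow> 'q \<Rightarrow> 'q \<Rightarrow> 'f" where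
  "seg_matrix i j = run_matrix d0 d1 Delta (conf i) (seg i j)"

definition weight :: "nat \<Rightarrow> 'q \<Rightarrow> 'f" where
  "weight i = vec_mat x (run_matrix d0 d1 Delta (p, n) (take i z))"

lemma take_eq_take_seg: "i \<le> j \<Longrightarrow> take j z = take i z @ seg i j"
  unfolding seg_def by (metis append_take_drop_id min.absorb1 take_take)

lemma take_seg: "i + k \<le> j \<Longrightarrow> take k (seg i j) = seg i (i + k)"
  unfolding seg_def by (simp add: take_drop min_def add.commute)

lemma length_seg: "j \<le> length z \<Longrightarrow> length (seg i j) = j - i"
  unfolding seg_def by simp

lemma conf_seg: "i \<le> j \<Longrightarrow> foldl (counter_step d0 d1) (conf i) (seg i j) = conf j"
  unfolding conf_def by (simp add: take_eq_take_seg[of i j])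

lemma weight_seg: "i \<le> j \<Longrightarrow> weight j = vec_mat (weight i) (seg_matrix i j)"
  unfolding weight_def seg_matrix_def conf_def
  by (simp add: take_eq_take_seg[of i j] run_matrix_append vec_mat_mat_mul)

lemma conf_0: "conf 0 = (p, n)"
  unfolding conf_def by simp

lemma counter_steps_by_one: "steps_by_one counter (length z)"
  unfolding steps_by_one_def
proof (intro allI impI)
  fix k assume "k < length z"
  then have "conf (Suc k) = counter_step d0 d1 (conf k) (z ! k)"
    unfolding conf_def by (simp add: take_Suc_conv_app_nth)
  then show "counter (Suc k) \<le> counter k + 1 \<and> counter k \<le> counter (Suc k) + 1"
    using counter_step_diff[OF wf] by simp
qed

lemma final_weight_notin: "weight (length z) \<notin> V"
  using minimal unfolding is_min_witness_def witness_iff weight_def by simp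

lemma shorter_word_in_subspace:
  assumes "length w < length z" "fst (foldl (counter_step d0 d1) (p, n) w) = state (length z)"
  shows "vec_mat x (run_matrix d0 d1 Delta (p, n) w) \<in> V"
  using minimal assms unfolding is_min_witness_def witness_iff conf_def by auto

lemma shifted_segment:
  assumes "a' \<le> b'" "b' \<le> length z" "state a = state a'" "counter a + d = counter a'"
    and "\<forall>i. a' \<le> i \<and> i < b' \<longrightarrow> d < counter i"
  shows "foldl (counter_step d0 d1) (conf a) (seg a' b') = (state b', counter b' - d)"
    and "run_matrix d0 d1 Delta (conf a) (seg a' b') = seg_matrix a' b'"
proof -
  have conf_a: "conf a = (state a', counter a' - d)" and conf_a': "conf a' = (state a', counter a')"
    using assms(3,4) by (metis add_diff_cancel_right' prod.collapse)+
  have "\<forall>k<length (seg a' b'). d < snd (foldl (counter_step d0 d1) (state a', counter a') (take k (seg a' b')))"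
  proof (intro allI impI)
    fix k assume "k < length (seg a' b')"
    then have "a' + k < b'" using assms(1,2) by (simp add: length_seg)
    then have "foldl (counter_step d0 d1) (conf a') (take k (seg a' b')) = conf (a' + k)"
      by (simp add: take_seg conf_seg)
    then show "d < snd (foldl (counter_step d0 d1) (state a', counter a') (take k (seg a' b')))"
      using assms(5) \<open>a' + k < b'\<close> conf_a' by auto
  qed
  note shift = counter_run_shift[OF wf _ this]
  have "d \<le> counter a'" using assms(4) by simp
  from shift(1)[OF this] shift(2)[OF this]
  show "foldl (counter_step d0 d1) (conf a) (seg a' b') = (state b', counter b' - d)"
    and "run_matrix d0 d1 Delta (conf a) (seg a' b') = seg_matrix a' b'"
    unfolding conf_a seg_matrix_def using conf_seg[OF assms(1)] conf_a' by simp_all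
qed

lemma cut_in_subspace:
  assumes "a < a'" "a' \<le> length z" "state a = state a'" "counter a + d = counter a'"
    and "\<forall>i. a' \<le> i \<and> i < length z \<longrightarrow> d < counter i"
  shows "vec_mat (weight a) (seg_matrix a' (length z)) \<in> V"
proof -
  define w where "w = take a z @ seg a' (length z)"
  note shift = shifted_segment[OF assms(2) order.refl assms(3-5)]
  have "length w < length z" using assms(1,2) by (simp add: w_def length_seg)
  moreover have "fst (foldl (counter_step d0 d1) (p, n) w) = state (length z)"
    using shift(1) by (simp add: w_def conf_def)
  ultimately have "vec_mat x (run_matrix d0 d1 Delta (p, n) w) \<in> V"
    by (rule shorter_word_in_subspace)
  moreover have "run_matrix d0 d1 Delta (p, n) w
      = mat_mul (run_matrix d0 d1 Delta (p, n) (take a z)) (seg_matrix a' (length z))"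
    using shift(2) by (simp add: w_def run_matrix_append conf_def)
  ultimately show ?thesis by (simp add: weight_def vec_mat_mat_mul)
qed

lemma double_cut_in_subspace:
  assumes "a < a'" "a' \<le> b'" "b' \<le> b" "b \<le> length z"
    and "state a = state a'" "state b = state b'" "counter a + d = counter a'" "counter b + d = counter b'"
    and "\<forall>i. a' \<le> i \<and> i < b' \<longrightarrow> d < counter i"
  shows "vec_mat (vec_mat (weight a) (seg_matrix a' b')) (seg_matrix b (length z)) \<in> V"
proof -
  define w where "w = take a z @ seg a' b' @ seg b (length z)"
  note shift = shifted_segment[OF assms(2) _ assms(5,7,9)]
  have "b' \<le> length z" using assms(3,4) by simp
  have conf_b: "foldl (counter_step d0 d1) (conf a) (seg a' b') = conf b"
    using shift(1)[OF \<open>b' \<le> length z\<close>] assms(6,8) by (metis add_diff_cancel_right' prod.collapse)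
  have "length w < length z" using assms(1-4) by (simp add: w_def length_seg)
  moreover have "fst (foldl (counter_step d0 d1) (p, n) w) = state (length z)"
    using conf_b conf_seg[OF assms(4)] by (simp add: w_def conf_def[of a])
  ultimately have "vec_mat x (run_matrix d0 d1 Delta (p, n) w) \<in> V"
    by (rule shorter_word_in_subspace)
  moreover have "run_matrix d0 d1 Delta (p, n) w = mat_mul (mat_mul
      (run_matrix d0 d1 Delta (p, n) (take a z)) (seg_matrix a' b')) (seg_matrix b (length z))"
    using shift(2)[OF \<open>b' \<le> length z\<close>] conf_b
    by (simp add: w_def run_matrix_append mat_mul_assoc seg_matrix_def conf_def[of a])
  ultimately show ?thesis by (simp add: weight_def vec_mat_mat_mul)
qed

lemma cut_between_last_visits:
  assumes "a < a'" "a' \<le> t" "t \<le> length z" "state a = state a'"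
    and "counter a = k" "counter a' = j" "0 < k" "k < j" "j - k \<le> M"
    and "\<forall>i. a' < i \<and> i \<le> t \<longrightarrow> j < counter i"
    and "\<forall>i. t < i \<and> i \<le> length z \<longrightarrow> M < counter i"
  shows "vec_mat (weight a) (seg_matrix a' (length z)) \<in> V"
proof (rule cut_in_subspace[where d = "j - k"])
  show "a < a'" "a' \<le> length z" "state a = state a'" "counter a + (j - k) = counter a'"
    using assms(1-8) by auto
  show "\<forall>i. a' \<le> i \<and> i < length z \<longrightarrow> j - k < counter i"
  proof (intro allI impI)
    fix i assume i: "a' \<le> i \<and> i < length z"
    consider "i = a'" | "a' < i" "i \<le> t" | "t < i" using i by linarith
    then show "j - k < counter i" using assms(6-11) i by cases auto
  qed
qed

lemma double_cut_between_visits: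
  assumes "a < a'" "a' \<le> t" "t \<le> b'" "b' < b" "b \<le> length z"
    and "state a = state a'" "state b = state b'"
    and "counter a = j" "counter b = j" "counter a' = k" "counter b' = k" "0 < j" "j < k"
    and "\<forall>i. a' < i \<and> i \<le> t \<longrightarrow> k < counter i" "\<forall>i. t \<le> i \<and> i < b' \<longrightarrow> k < counter i"
  shows "vec_mat (vec_mat (weight a) (seg_matrix a' b')) (seg_matrix b (length z)) \<in> V"
proof (rule double_cut_in_subspace[where d = "k - j"])
  show "a < a'" "a' \<le> b'" "b' \<le> b" "b \<le> length z" "state a = state a'" "state b = state b'"
    "counter a + (k - j) = counter a'" "counter b + (k - j) = counter b'"
    using assms(1-11,13) by auto
  show "\<forall>i. a' \<le> i \<and> i < b' \<longrightarrow> k - j < counter i"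
  proof (intro allI impI)
    fix i assume i: "a' \<le> i \<and> i < b'"
    consider "i = a'" | "a' < i" "i \<le> t" | "t \<le> i" using i by linarith
    then have "k \<le> counter i" using assms(10,14,15) i by cases auto
    then show "k - j < counter i" using diff_less[of j k] assms(12,13) by linarith
  qed
qed

lemma no_peak_without_return:
  assumes "t \<le> length z" "n \<le> M" "CARD('q) * CARD('c) \<le> M"
    and "M + CARD('q) * CARD('c) \<le> counter t"
    and "\<forall>i. t < i \<and> i \<le> length z \<longrightarrow> M < counter i"
  shows False
proof -
  let ?K = "CARD('q) * CARD('c)"
  let ?levels = "{M..M + ?K}"
  have "counter 0 \<le> M" using conf_0 assms(2) by simp
  then obtain A where A: "\<And>l. l \<in> ?levels \<Longrightarrow>
      A l \<le> t \<and> counter (A l) = l \<and> (\<forall>k. A l < k \<and> k \<le> t \<longrightarrow> l < counter k)"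
    and A_mono: "strict_mono_on ?levels A"
    using last_visits[OF counter_steps_by_one assms(1) _ assms(4)] by blast
  have "finite ?levels" "CARD('c) * CARD('q) < card ?levels" by simp_all
  then obtain s where s: "CARD('q) < card {l\<in>?levels. state (A l) = s}"
    by (rule pigeonhole_fibre)
  define I where "I = {l\<in>?levels. state (A l) = s}"
  have "\<exists>j\<in>I. vec_mat (weight (A j)) (seg_matrix (A j) (length z)) \<in> V"
  proof (rule subspace_exchange_max[OF subspace, where v = "\<lambda>k. weight (A k)"
        and g = "\<lambda>j k. vec_mat (weight (A k)) (seg_matrix (A j) (length z))"])
    show "finite I" unfolding I_def by simp
    show "CARD('q) < card I" using s unfolding I_def .
    show "\<forall>q. (\<Sum>k\<in>I. c k * vec_mat (weight (A k)) (seg_matrix (A j) (length z)) q) = 0"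
      if "\<forall>i. (\<Sum>k\<in>I. c k * weight (A k) i) = 0" for j c
      using relation_vec_mat_right[OF that] .
    show "vec_mat (weight (A k)) (seg_matrix (A j) (length z)) \<in> V"
      if "j \<in> I" "k \<in> I" "k < j" for j k
    proof -
      have levels: "k \<in> ?levels" "j \<in> ?levels" and states: "state (A k) = state (A j)"
        using that unfolding I_def by auto
      have "0 < M" using less_le_trans[OF _ assms(3)] by simp
      moreover have "j - k \<le> M" using levels assms(3) by auto
      ultimately show ?thesis
        using cut_between_last_visits[OF monotone_onD[OF A_mono levels \<open>k < j\<close>] _ assms(1) states
            _ _ _ \<open>k < j\<close> _ _ assms(5)] A[OF levels(1)] A[OF levels(2)] levels
        by auto
    qed
  qed
  then obtain j where "j \<in> I" "vec_mat (weight (A j)) (seg_matrix (A j) (length z)) \<in> V" ..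
  moreover have "A j \<le> length z" using A[of j] \<open>j \<in> I\<close> assms(1) unfolding I_def by auto
  ultimately show False using weight_seg final_weight_notin by metis
qed

lemma no_peak_with_return:
  assumes "t \<le> e" "e \<le> length z" "n \<le> M" "0 < M"
    and "M + (CARD('q) * CARD('c))\<^sup>2 \<le> counter t" "counter e \<le> M"
  shows False
proof -
  let ?levels = "{M..M + (CARD('q) * CARD('c))\<^sup>2}"
  have t_le: "t \<le> length z" using assms(1,2) by simp
  have start: "counter 0 \<le> M" using conf_0 assms(3) by simp
  obtain A where A: "\<And>l. l \<in> ?levels \<Longrightarrow>
      A l \<le> t \<and> counter (A l) = l \<and> (\<forall>k. A l < k \<and> k \<le> t \<longrightarrow> l < counter k)"
    and A_mono: "strict_mono_on ?levels A"
    using last_visits[OF counter_steps_by_one t_le start assms(5)] by blast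
  obtain B where B: "\<And>l. l \<in> ?levels \<Longrightarrow>
      t \<le> B l \<and> B l \<le> e \<and> counter (B l) = l \<and> (\<forall>k. t \<le> k \<and> k < B l \<longrightarrow> l < counter k)"
    and B_antimono: "strict_antimono_on ?levels B"
    using first_visits[OF counter_steps_by_one assms(1,2,6,5)] by blast
  have "finite ?levels" "CARD('c \<times> 'c) * CARD('q \<times> 'q) < card ?levels"
    by (simp_all add: power2_eq_square mult_ac)
  then obtain s where s: "CARD('q \<times> 'q) < card {l\<in>?levels. (state (A l), state (B l)) = s}"
    by (rule pigeonhole_fibre)
  define I where "I = {l\<in>?levels. (state (A l), state (B l)) = s}"
  let ?g = "\<lambda>j k. vec_mat (vec_mat (weight (A j)) (seg_matrix (A k) (B k))) (seg_matrix (B j) (length z))"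
  have "\<exists>j\<in>I. ?g j j \<in> V"
  proof (rule subspace_exchange_min[OF subspace, where v = "\<lambda>k. case_prod (seg_matrix (A k) (B k))"
        and g = ?g])
    show "finite I" unfolding I_def by simp
    show "CARD('q \<times> 'q) < card I" using s unfolding I_def .
    show "\<forall>q. (\<Sum>k\<in>I. c k * ?g j k q) = 0"
      if "\<forall>i. (\<Sum>k\<in>I. c k * case_prod (seg_matrix (A k) (B k)) i) = 0" for j c
      using that by (intro relation_vec_mat_right relation_vec_mat_left)
    show "?g j k \<in> V" if "j \<in> I" "k \<in> I" "j < k" for j k
    proof -
      have levels: "j \<in> ?levels" "k \<in> ?levels"
        and states: "state (A j) = state (A k)" "state (B j) = state (B k)"
        using that unfolding I_def by auto
      have "0 < j" using levels(1) assms(4) by simp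
      then show ?thesis
        using double_cut_between_visits[OF monotone_onD[OF A_mono levels \<open>j < k\<close>] _ _
            monotone_onD[OF B_antimono levels \<open>j < k\<close>] _ states]
          A[OF levels(1)] A[OF levels(2)] B[OF levels(1)] B[OF levels(2)] \<open>j < k\<close> assms(2)
        by auto
    qed
  qed
  then obtain j where "j \<in> I" "?g j j \<in> V" ..
  then have "j \<in> ?levels" unfolding I_def by simp
  then have "A j \<le> B j" "B j \<le> length z" using A[of j] B[of j] assms(2) by auto
  then have "weight (length z) = ?g j j" using weight_seg by simp
  then show False using \<open>?g j j \<in> V\<close> final_weight_notin by simp
qed

end

theorem mainTheorem13:
  fixes delta0 delta1 :: "'c::finite \<Rightarrow> 'a::finite \<Rightarrow> 'c \<times> int"
    and Delta :: "'a \<Rightarrow> nat \<Rightarrow> 'q::finite \<Rightarrow> 'q \<Rightarrow> 'f::field"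
    and x :: "'q \<Rightarrow> 'f" and p :: 'c and n :: nat
    and V :: "('q \<Rightarrow> 'f) set" and S :: "'c set" and z :: "'a list"
  assumes "odca_wf delta0 delta1"
    and "is_subspace V"
    and "is_min_witness delta0 delta1 Delta (x, p, n) V S (UNIV :: nat set) z"
  shows "\<forall>cfg \<in> set (odca_run delta0 delta1 Delta (x, p, n) z).
           snd (snd cfg) < max n (card (UNIV :: 'q set) * card (UNIV :: 'c set)) + (card (UNIV :: 'q set) * card (UNIV :: 'c set))^2"
proof (intro ballI, rule ccontr)
  interpret min_witness delta0 delta1 Delta x p n V S z
    using assms by unfold_locales
  let ?K = "CARD('q) * CARD('c)"
  let ?M = "max n ?K"
  fix cfg assume cfg: "cfg \<in> set (odca_run delta0 delta1 Delta (x, p, n) z)"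
    and high: "\<not> snd (snd cfg) < ?M + ?K\<^sup>2"
  obtain t where t: "t \<le> length z" "cfg = foldl (odca_step delta0 delta1 Delta) (x, p, n) (take t z)"
    using set_odca_run[OF cfg] by blast
  then have high_t: "?M + ?K\<^sup>2 \<le> counter t" using high by (simp add: foldl_odca_step conf_def)
  have "0 < ?K" by simp
  then have "?K \<le> ?K\<^sup>2" by (simp add: power2_eq_square)
  show False
  proof (cases "\<forall>i. t < i \<and> i \<le> length z \<longrightarrow> ?M < counter i")
    case True
    have "?M + ?K \<le> counter t" using high_t \<open>?K \<le> ?K\<^sup>2\<close> by linarith
    from no_peak_without_return[OF t(1) max.cobounded1 max.cobounded2 this True]
    show False .
  next
    case False
    then obtain e where e: "t < e" "e \<le> length z" "\<not> ?M < counter e" by blast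
    have "counter e \<le> ?M" using e(3) by (simp only: not_less)
    moreover have "0 < ?M" using less_le_trans[OF \<open>0 < ?K\<close> max.cobounded2] .
    ultimately show False
      using no_peak_with_return[OF less_imp_le[OF e(1)] e(2) max.cobounded1 _ high_t] by blast
  qed
qed

end
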